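(* For every $\lambda>2$ there exist: the spaces $X_1=X_2=X_3=\{0,1\}$, the uniform probability measures $\nu_i$ on $X_i$, constants $0<m<M$ with $M/m=\lambda$, and a consistent family of probability measures $\mu_{12},\mu_{13},\mu_{23}$ on $X_i\times X_j$ with densities $\rho_{ij}=d\mu_{ij}/d(\nu_i\otimes\nu_j)$ satisfying $m\le\rho_{ij}\le M$, such that $\Pi(\mu_{12},\mu_{13},\mu_{23})$ is empty. (Hence the constant $\lambda_{32}$ in the density condition for $n=3$, $k=2$ cannot exceed $2$.)
   Context: A family $\mu_{12},\mu_{13},\mu_{23}$ of probability measures on $X_1\times X_2$, $X_1\times X_3$, $X_2\times X_3$ is consistent if any two of them have the same one-dimensional marginal on their common coordinate. $\Pi(\mu_{12},\mu_{13},\mu_{23})$ is the set of probability measures $\mu$ on $X_1\times X_2\times X_3$ whose projection onto $X_i\times X_j$ equals $\mu_{ij}$ for all $1\le i<j\le3$. The density condition: for given $\lambda$, whenever a consistent family has densities w.r.t. $\nu_i\otimes\nu_j$ bounded between $m$ and $M$ with $M/m\le\lambda$, a uniting measure exists. *)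

theory Defs
  imports "HOL-Probability.Probability"
begin

text \<open>The spaces X1 = X2 = X3 = {0,1} are modelled by the type bool.
Probability measures on finite spaces are modelled as pmfs.\<close>

definition unif :: "bool pmf" where
  "unif = pmf_of_set (UNIV :: bool set)"

text \<open>Density of a measure on X_i x X_j w.r.t. the product of the reference measures
(pointwise ratio, which is the Radon-Nikodym derivative on a finite space whose reference
measure charges every point).\<close>
definition dens2 :: "'a pmf \<Rightarrow> 'b pmf \<Rightarrow> ('a \<times> 'b) pmf \<Rightarrow> 'a \<times> 'b \<Rightarrow> real" where
  "dens2 \<nu>1 \<nu>2 \<mu> = (\<lambda>(a,b). pmf \<mu> (a,b) / (pmf \<nu>1 a * pmf \<nu>2 b))"

definition consistent3 ::
  "('a \<times> 'b) pmf \<Rightarrow> ('a \<times> 'c) pmf \<Rightarrow> ('b \<times> 'c) pmf \<Rightarrow> bool" where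
  "consistent3 \<mu>12 \<mu>13 \<mu>23 \<longleftrightarrow>
     map_pmf fst \<mu>12 = map_pmf fst \<mu>13 \<and>
     map_pmf snd \<mu>12 = map_pmf fst \<mu>23 \<and>
     map_pmf snd \<mu>13 = map_pmf snd \<mu>23"

definition Pi3 ::
  "('a \<times> 'b) pmf \<Rightarrow> ('a \<times> 'c) pmf \<Rightarrow> ('b \<times> 'c) pmf \<Rightarrow> ('a \<times> 'b \<times> 'c) pmf set" where
  "Pi3 \<mu>12 \<mu>13 \<mu>23 = {\<mu>.
     map_pmf (\<lambda>(x,y,z). (x,y)) \<mu> = \<mu>12 \<and>
     map_pmf (\<lambda>(x,y,z). (x,z)) \<mu> = \<mu>13 \<and>
     map_pmf (\<lambda>(x,y,z). (y,z)) \<mu> = \<mu>23}"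

end

theory Submission
  imports Defs
begin

text \<open>Take all three pair laws equal to a noisy copy: the second coordinate is the first one,
uniform on \<open>{0,1}\<close>, flipped with probability \<open>p = \<lambda>/(1+\<lambda>)\<close>. Its density w.r.t.
\<open>unif \<otimes> unif\<close> takes the values \<open>2(1-p)\<close> and \<open>2p\<close>, whose ratio is \<open>\<lambda>\<close>. A uniting measure
would make each of the events \<open>x\<noteq>y\<close>, \<open>x\<noteq>z\<close>, \<open>y\<noteq>z\<close> have probability \<open>p\<close>; but no
three bits are pairwise distinct, so these probabilities sum to at most \<open>2\<close>, while
\<open>3p > 2\<close> exactly when \<open>\<lambda> > 2\<close>.\<close>

lemma (in prob_space) prob_three_events_le_2:
  assumes "A \<in> events" "B \<in> events" "C \<in> events" and "A \<inter> B \<inter> C = {}"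
  shows "prob A + prob B + prob C \<le> 2"
proof -
  have "prob (A \<union> B) = prob A + prob B - prob (A \<inter> B)"
    using assms by (simp add: finite_measure_Union' finite_measure_Diff' Int_commute)
  moreover have "prob C \<le> prob (space M - A \<inter> B)"
    using assms sets.sets_into_space by (intro finite_measure_mono) auto
  moreover have "prob (space M - A \<inter> B) = 1 - prob (A \<inter> B)"
    using assms by (intro prob_compl) auto
  ultimately show ?thesis
    using prob_le_1[of "A \<union> B"] by linarith
qed

lemma Pi3_empty_if_disagreement_gt_2:
  fixes \<mu>12 \<mu>13 \<mu>23 :: "(bool \<times> bool) pmf"
  assumes "measure_pmf.prob \<mu>12 {(a, b). a \<noteq> b} + measure_pmf.prob \<mu>13 {(a, b). a \<noteq> b}
            + measure_pmf.prob \<mu>23 {(a, b). a \<noteq> b} > 2"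
  shows "Pi3 \<mu>12 \<mu>13 \<mu>23 = {}"
proof (rule ccontr)
  assume "Pi3 \<mu>12 \<mu>13 \<mu>23 \<noteq> {}"
  then obtain \<nu> where
    "\<mu>12 = map_pmf (\<lambda>(x, y, z). (x, y)) \<nu>" "\<mu>13 = map_pmf (\<lambda>(x, y, z). (x, z)) \<nu>"
    "\<mu>23 = map_pmf (\<lambda>(x, y, z). (y, z)) \<nu>"
    unfolding Pi3_def by auto
  then have "measure_pmf.prob \<mu>12 {(a, b). a \<noteq> b} = measure_pmf.prob \<nu> {(x, y, z). x \<noteq> y}"
    "measure_pmf.prob \<mu>13 {(a, b). a \<noteq> b} = measure_pmf.prob \<nu> {(x, y, z). x \<noteq> z}"
    "measure_pmf.prob \<mu>23 {(a, b). a \<noteq> b} = measure_pmf.prob \<nu> {(x, y, z). y \<noteq> z}"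
    by (auto intro!: arg_cong[where f = "measure_pmf.prob \<nu>"])
  moreover have "measure_pmf.prob \<nu> {(x, y, z). x \<noteq> y} + measure_pmf.prob \<nu> {(x, y, z). x \<noteq> z}
               + measure_pmf.prob \<nu> {(x, y, z). y \<noteq> z} \<le> 2"
    by (rule measure_pmf.prob_three_events_le_2) auto
  ultimately show False
    using assms by linarith
qed

lemma pmf_unif: "pmf unif a = 1 / 2"
  by (simp add: unif_def)

lemma dens2_unif_unif: "dens2 unif unif \<mu> p = 4 * pmf \<mu> p"
  by (cases p) (simp add: dens2_def pmf_unif)

definition noisy_copy :: "real \<Rightarrow> (bool \<times> bool) pmf" where
  "noisy_copy p = map_pmf (\<lambda>(x, flip). (x, x \<noteq> flip)) (pair_pmf unif (bernoulli_pmf p))"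

lemma pmf_noisy_copy:
  assumes "0 \<le> p" "p \<le> 1"
  shows "pmf (noisy_copy p) (a, b) = (if a = b then 1 - p else p) / 2"
proof -
  have "inj (\<lambda>(x :: bool, flip). (x, x \<noteq> flip))"
    unfolding inj_def by auto
  from pmf_map_inj'[OF this, of "pair_pmf unif (bernoulli_pmf p)" "(a, a \<noteq> b)"]
  have "pmf (noisy_copy p) (a, b) = pmf unif a * pmf (bernoulli_pmf p) (a \<noteq> b)"
    by (cases a) (simp_all add: noisy_copy_def pmf_pair)
  then show ?thesis
    using assms by (simp add: pmf_unif)
qed

lemma dens2_noisy_copy:
  assumes "0 \<le> p" "p \<le> 1"
  shows "dens2 unif unif (noisy_copy p) (a, b) = (if a = b then 2 * (1 - p) else 2 * p)"
  using assms by (simp add: dens2_unif_unif pmf_noisy_copy)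

lemma prob_noisy_copy_disagree:
  assumes "0 \<le> p" "p \<le> 1"
  shows "measure_pmf.prob (noisy_copy p) {(a, b). a \<noteq> b} = p"
proof -
  have "{(a, b). a \<noteq> b} = {(True, False), (False, True)}"
    by auto
  then show ?thesis
    using assms by (simp add: measure_measure_pmf_finite pmf_noisy_copy)
qed

lemma consistent3_noisy_copy:
  assumes "0 \<le> p" "p \<le> 1"
  shows "consistent3 (noisy_copy p) (noisy_copy p) (noisy_copy p)"
proof -
  have "map_pmf prod.swap (noisy_copy p) = noisy_copy p"
  proof (rule pmf_eqI)
    fix x :: "bool \<times> bool"
    have "pmf (map_pmf prod.swap (noisy_copy p)) (prod.swap (prod.swap x))
          = pmf (noisy_copy p) (prod.swap x)"
      by (rule pmf_map_inj') simp
    then show "pmf (map_pmf prod.swap (noisy_copy p)) x = pmf (noisy_copy p) x"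
      using assms by (cases x) (auto simp: pmf_noisy_copy)
  qed
  moreover have "map_pmf snd (noisy_copy p) = map_pmf fst (map_pmf prod.swap (noisy_copy p))"
    by (simp add: pmf.map_comp comp_def)
  ultimately show ?thesis
    by (simp add: consistent3_def)
qed

theorem mainTheorem3:
  fixes lam :: real
  assumes "lam > 2"
  shows "\<exists>(m::real) (M::real) (\<mu>12 :: (bool \<times> bool) pmf) (\<mu>13 :: (bool \<times> bool) pmf)
            (\<mu>23 :: (bool \<times> bool) pmf).
           0 < m \<and> m < M \<and> M / m = lam \<and>
           consistent3 \<mu>12 \<mu>13 \<mu>23 \<and>
           (\<forall>p. m \<le> dens2 unif unif \<mu>12 p \<and> dens2 unif unif \<mu>12 p \<le> M) \<and>
           (\<forall>p. m \<le> dens2 unif unif \<mu>13 p \<and> dens2 unif unif \<mu>13 p \<le> M) \<and>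
           (\<forall>p. m \<le> dens2 unif unif \<mu>23 p \<and> dens2 unif unif \<mu>23 p \<le> M) \<and>
           Pi3 \<mu>12 \<mu>13 \<mu>23 = {}"
proof -
  define p where "p = lam / (1 + lam)"
  have p: "0 \<le> p" "p \<le> 1" "3 * p > 2"
    using assms by (auto simp: p_def field_simps)
  define \<mu> where "\<mu> = noisy_copy p"
  have "1 - p = 1 / (1 + lam)"
    using assms by (simp add: p_def field_simps)
  then have "0 < 2 * (1 - p)" "2 * (1 - p) < 2 * p" "2 * p / (2 * (1 - p)) = lam"
    using assms p by (simp_all add: p_def)
  moreover have "\<forall>x. 2 * (1 - p) \<le> dens2 unif unif \<mu> x \<and> dens2 unif unif \<mu> x \<le> 2 * p"
    using p by (auto simp: \<mu>_def dens2_noisy_copy)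
  moreover have "Pi3 \<mu> \<mu> \<mu> = {}"
    using p prob_noisy_copy_disagree[OF p(1,2)]
    by (intro Pi3_empty_if_disagreement_gt_2) (simp add: \<mu>_def)
  ultimately show ?thesis
    using consistent3_noisy_copy[OF p(1,2)] unfolding \<mu>_def by blast
qed

end
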